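(* Fix a reflection matrix $\mathbf\Phi$ and let $(\{\mathbf W_k^\star\}_{k\in\mathcal K},\mathbf R_0^\star,u^\star)$ be an optimal solution of problem (SDR3.3). Define, for each $k\in\mathcal K$, $$\mathbf w_k^{\mathrm{opt,I}}=(\mathbf h_k^H\mathbf W_k^\star\mathbf h_k)^{-1/2}\,\mathbf W_k^\star\mathbf h_k,\qquad \mathbf R_0^{\mathrm{opt,I}}=\mathbf R_0^\star+\sum_{k\in\mathcal K}\mathbf W_k^\star-\sum_{k\in\mathcal K}\mathbf w_k^{\mathrm{opt,I}}(\mathbf w_k^{\mathrm{opt,I}})^H .$$ Then these are well defined, $\mathbf R_0^{\mathrm{opt,I}}\succeq\mathbf 0$, and $(\{\mathbf w_k^{\mathrm{opt,I}}\},\mathbf R_0^{\mathrm{opt,I}},u^\star)$ is an optimal solution of problem (P3.2). In particular (P3.2) and (SDR3.3) have the same optimal value.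
   Context: Let $M,N,K\ge1$ be integers and $\mathcal K=\{1,\dots,K\}$. Fixed data: $\mathbf G\in\mathbb C^{N\times M}$, $\mathbf h_{\mathrm d,k}\in\mathbb C^{M}$, $\mathbf h_{\mathrm r,k}\in\mathbb C^{N}$ ($k\in\mathcal K$), thresholds $\Gamma_k>0$, noise powers $\sigma_k^2>0$, power budget $P_0>0$, an angle $\theta$, spacing $d>0$ and wavelength $\lambda>0$. A reflection matrix is $\mathbf\Phi=\mathrm{diag}(\mathbf v)$, $\mathbf v\in\mathbb C^N$, $|v_n|=1$. For given $\mathbf\Phi$: $\mathbf h_k=\mathbf h_{\mathrm d,k}+\mathbf G^H\mathbf\Phi^H\mathbf h_{\mathrm r,k}$, $\mathbf H_k=\mathbf h_k\mathbf h_k^H$. Let $\mathbf a(\theta)\in\mathbb C^N$ have entries $e^{j2\pi (n-1)d\sin\theta/\lambda}$, $n=1,\dots,N$, and $\dot{\mathbf a}(\theta)$ its derivative in $\theta$; put $\mathbf b=\mathbf G^T\mathbf\Phi^T\mathbf a(\theta)$, $\dot{\mathbf b}=\mathbf G^T\mathbf\Phi^T\dot{\mathbf a}(\theta)$, $\mathbf B=\mathbf b\mathbf b^T$, $\dot{\mathbf B}=\dot{\mathbf b}\mathbf b^T+\mathbf b\dot{\mathbf b}^T$. For Hermitian $\mathbf R$ and $u\in\mathbb R$ let $$\mathcal M(\mathbf R,u)=\begin{bmatrix}\mathrm{tr}(\dot{\mathbf B}\mathbf R\dot{\mathbf B}^H)-u & \mathrm{tr}(\mathbf B\mathbf R\dot{\mathbf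 B}^H)\\ \mathrm{tr}(\dot{\mathbf B}\mathbf R\mathbf B^H) & \mathrm{tr}(\mathbf B\mathbf R\mathbf B^H)\end{bmatrix}$$ (when $\mathrm{tr}(\mathbf B\mathbf R\mathbf B^H)>0$, $\mathcal M(\mathbf R,u)\succeq\mathbf 0$ iff $u\le \mathrm{tr}(\dot{\mathbf B}\mathbf R\dot{\mathbf B}^H)-|\mathrm{tr}(\mathbf B\mathbf R\dot{\mathbf B}^H)|^2/\mathrm{tr}(\mathbf B\mathbf R\mathbf B^H)$, the quantity inversely proportional to the DoA CRB). Type-I SINR: $\gamma_k^{\mathrm I}=|\mathbf h_k^H\mathbf w_k|^2/(\sum_{i\ne k}|\mathbf h_k^H\mathbf w_i|^2+\mathbf h_k^H\mathbf R_0\mathbf h_k+\sigma_k^2)$. Problem (P3.2) (fixed $\mathbf\Phi$): maximize $u$ over $\mathbf w_k\in\mathbb C^M$, Hermitian $\mathbf R_0\succeq\mathbf 0$, $u\in\mathbb R$, subject to $\mathcal M(\sum_k\mathbf w_k\mathbf w_k^H+\mathbf R_0,u)\succeq\mathbf 0$, $\gamma_k^{\mathrm I}\ge\Gamma_k$ for all $k$, and $\sum_k\|\mathbf w_k\|^2+\mathrm{tr}(\mathbf R_0)\le P_0$. Problem (SDR3.3) (fixed $\mathbf\Phi$): maximize $u$ over Hermitian $\mathbf W_k\succeq\mathbf 0$, $\mathbf R_0\succeq\mathbf 0$, $u\in\mathbb R$, subject to $\mathcal M(\sum_k\mathbf W_k+\mathbf R_0,u)\succeq\mathbf 0$, $(1+\tfrac1{\Gamma_k})\mathrm{tr}(\mathbf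 H_k\mathbf W_k)-\mathrm{tr}(\mathbf H_k(\sum_i\mathbf W_i+\mathbf R_0))\ge\sigma_k^2$ for all $k$, and $\sum_k\mathrm{tr}(\mathbf W_k)+\mathrm{tr}(\mathbf R_0)\le P_0$. *)

theory Defs
  imports "Jordan_Normal_Form.Schur_Decomposition"
begin

(* Complex matrices/vectors are Jordan_Normal_Form matrices/vectors with
   0-based natural-number indices.  Users k \<in> K are indexed by k < K. *)

definition ctrace :: "complex mat \<Rightarrow> complex" where
  "ctrace A = (\<Sum>i<dim_row A. A $$ (i, i))"

definition hermitian_mat :: "nat \<Rightarrow> complex mat \<Rightarrow> bool" where
  "hermitian_mat n A \<longleftrightarrow> A \<in> carrier_mat n n \<and> mat_adjoint A = A"

definition psd_mat :: "nat \<Rightarrow> complex mat \<Rightarrow> bool" where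
  "psd_mat n A \<longleftrightarrow> hermitian_mat n A \<and>
     (\<forall>x \<in> carrier_vec n. Re (conjugate x \<bullet> (A *\<^sub>v x)) \<ge> 0)"

definition outer :: "complex vec \<Rightarrow> complex vec \<Rightarrow> complex mat" where
  "outer x y = mat (dim_vec x) (dim_vec y) (\<lambda>(i, j). x $ i * y $ j)"

definition msum :: "nat \<Rightarrow> nat \<Rightarrow> (nat \<Rightarrow> complex mat) \<Rightarrow> complex mat" where
  "msum n K F = mat n n (\<lambda>(i, j). \<Sum>k<K. F k $$ (i, j))"

definition sqnorm :: "complex vec \<Rightarrow> real" where
  "sqnorm x = (\<Sum>i<dim_vec x. (cmod (x $ i))\<^sup>2)"

definition Phi :: "complex vec \<Rightarrow> complex mat" where
  "Phi v = mat (dim_vec v) (dim_vec v) (\<lambda>(i, j). if i = j then v $ i else 0)"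

definition heff :: "complex mat \<Rightarrow> (nat \<Rightarrow> complex vec) \<Rightarrow> (nat \<Rightarrow> complex vec)
    \<Rightarrow> complex vec \<Rightarrow> nat \<Rightarrow> complex vec" where
  "heff G hD hR v k = hD k + mat_adjoint G *\<^sub>v (mat_adjoint (Phi v) *\<^sub>v hR k)"

definition Hmat :: "complex vec \<Rightarrow> complex mat" where
  "Hmat h = outer h (conjugate h)"

(* steering vector a(theta), entries exp(j 2 pi (n-1) d sin theta / lambda), n = 1..N
   (here 0-based index n = 0..N-1) *)
definition steer :: "nat \<Rightarrow> real \<Rightarrow> real \<Rightarrow> real \<Rightarrow> complex vec" where
  "steer N d lam \<theta> = vec N (\<lambda>n. exp (\<i> * of_real (2 * pi * real n * d * sin \<theta> / lam)))"

definition steer_dot :: "nat \<Rightarrow> real \<Rightarrow> real \<Rightarrow> real \<Rightarrow> complex vec" where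
  "steer_dot N d lam \<theta> = vec N (\<lambda>n. \<i> * of_real (2 * pi * real n * d * cos \<theta> / lam)
       * exp (\<i> * of_real (2 * pi * real n * d * sin \<theta> / lam)))"

definition bvec :: "complex mat \<Rightarrow> complex vec \<Rightarrow> real \<Rightarrow> real \<Rightarrow> real \<Rightarrow> complex vec" where
  "bvec G v d lam \<theta> = transpose_mat G *\<^sub>v (transpose_mat (Phi v) *\<^sub>v steer (dim_vec v) d lam \<theta>)"

definition bdot :: "complex mat \<Rightarrow> complex vec \<Rightarrow> real \<Rightarrow> real \<Rightarrow> real \<Rightarrow> complex vec" where
  "bdot G v d lam \<theta> = transpose_mat G *\<^sub>v (transpose_mat (Phi v) *\<^sub>v steer_dot (dim_vec v) d lam \<theta>)"

definition Bmat :: "complex mat \<Rightarrow> complex vec \<Rightarrow> real \<Rightarrow> real \<Rightarrow> real \<Rightarrow> complex mat" where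
  "Bmat G v d lam \<theta> = outer (bvec G v d lam \<theta>) (bvec G v d lam \<theta>)"

definition Bdot :: "complex mat \<Rightarrow> complex vec \<Rightarrow> real \<Rightarrow> real \<Rightarrow> real \<Rightarrow> complex mat" where
  "Bdot G v d lam \<theta> = outer (bdot G v d lam \<theta>) (bvec G v d lam \<theta>)
                      + outer (bvec G v d lam \<theta>) (bdot G v d lam \<theta>)"

definition CRBmat :: "complex mat \<Rightarrow> complex vec \<Rightarrow> real \<Rightarrow> real \<Rightarrow> real
    \<Rightarrow> complex mat \<Rightarrow> real \<Rightarrow> complex mat" where
  "CRBmat G v d lam \<theta> R u =
    (let B = Bmat G v d lam \<theta>; Bd = Bdot G v d lam \<theta> in
     mat 2 2 (\<lambda>(i, j).
       if i = 0 \<and> j = 0 then ctrace (Bd * R * mat_adjoint Bd) - of_real u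
       else if i = 0 \<and> j = 1 then ctrace (B * R * mat_adjoint Bd)
       else if i = 1 \<and> j = 0 then ctrace (Bd * R * mat_adjoint B)
       else ctrace (B * R * mat_adjoint B)))"

definition sinrI :: "nat \<Rightarrow> complex vec \<Rightarrow> (nat \<Rightarrow> complex vec) \<Rightarrow> complex mat \<Rightarrow> real
    \<Rightarrow> nat \<Rightarrow> real" where
  "sinrI K h w R0 s2 k =
     (cmod (conjugate h \<bullet> w k))\<^sup>2 /
     ((\<Sum>i\<in>{..<K} - {k}. (cmod (conjugate h \<bullet> w i))\<^sup>2) + Re (conjugate h \<bullet> (R0 *\<^sub>v h)) + s2)"

definition feas_P32 :: "nat \<Rightarrow> nat \<Rightarrow> complex mat \<Rightarrow> (nat \<Rightarrow> complex vec) \<Rightarrow> (nat \<Rightarrow> complex vec)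
    \<Rightarrow> (nat \<Rightarrow> real) \<Rightarrow> (nat \<Rightarrow> real) \<Rightarrow> real \<Rightarrow> real \<Rightarrow> real \<Rightarrow> real \<Rightarrow> complex vec
    \<Rightarrow> (nat \<Rightarrow> complex vec) \<Rightarrow> complex mat \<Rightarrow> real \<Rightarrow> bool" where
  "feas_P32 M K G hD hR Gam s2 P0 \<theta> d lam v w R0 u \<longleftrightarrow>
     (\<forall>k<K. w k \<in> carrier_vec M) \<and> psd_mat M R0 \<and>
     psd_mat 2 (CRBmat G v d lam \<theta> (msum M K (\<lambda>k. outer (w k) (conjugate (w k))) + R0) u) \<and>
     (\<forall>k<K. sinrI K (heff G hD hR v k) w R0 (s2 k) k \<ge> Gam k) \<and>
     (\<Sum>k<K. sqnorm (w k)) + Re (ctrace R0) \<le> P0"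

definition opt_P32 :: "nat \<Rightarrow> nat \<Rightarrow> complex mat \<Rightarrow> (nat \<Rightarrow> complex vec) \<Rightarrow> (nat \<Rightarrow> complex vec)
    \<Rightarrow> (nat \<Rightarrow> real) \<Rightarrow> (nat \<Rightarrow> real) \<Rightarrow> real \<Rightarrow> real \<Rightarrow> real \<Rightarrow> real \<Rightarrow> complex vec
    \<Rightarrow> (nat \<Rightarrow> complex vec) \<Rightarrow> complex mat \<Rightarrow> real \<Rightarrow> bool" where
  "opt_P32 M K G hD hR Gam s2 P0 \<theta> d lam v w R0 u \<longleftrightarrow>
     feas_P32 M K G hD hR Gam s2 P0 \<theta> d lam v w R0 u \<and>
     (\<forall>w' R0' u'. feas_P32 M K G hD hR Gam s2 P0 \<theta> d lam v w' R0' u' \<longrightarrow> u' \<le> u)"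

definition feas_SDR33 :: "nat \<Rightarrow> nat \<Rightarrow> complex mat \<Rightarrow> (nat \<Rightarrow> complex vec) \<Rightarrow> (nat \<Rightarrow> complex vec)
    \<Rightarrow> (nat \<Rightarrow> real) \<Rightarrow> (nat \<Rightarrow> real) \<Rightarrow> real \<Rightarrow> real \<Rightarrow> real \<Rightarrow> real \<Rightarrow> complex vec
    \<Rightarrow> (nat \<Rightarrow> complex mat) \<Rightarrow> complex mat \<Rightarrow> real \<Rightarrow> bool" where
  "feas_SDR33 M K G hD hR Gam s2 P0 \<theta> d lam v W R0 u \<longleftrightarrow>
     (\<forall>k<K. psd_mat M (W k)) \<and> psd_mat M R0 \<and>
     psd_mat 2 (CRBmat G v d lam \<theta> (msum M K W + R0) u) \<and>
     (\<forall>k<K. let H = Hmat (heff G hD hR v k) in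
        (1 + 1 / Gam k) * Re (ctrace (H * W k)) - Re (ctrace (H * (msum M K W + R0))) \<ge> s2 k) \<and>
     (\<Sum>k<K. Re (ctrace (W k))) + Re (ctrace R0) \<le> P0"

definition opt_SDR33 :: "nat \<Rightarrow> nat \<Rightarrow> complex mat \<Rightarrow> (nat \<Rightarrow> complex vec) \<Rightarrow> (nat \<Rightarrow> complex vec)
    \<Rightarrow> (nat \<Rightarrow> real) \<Rightarrow> (nat \<Rightarrow> real) \<Rightarrow> real \<Rightarrow> real \<Rightarrow> real \<Rightarrow> real \<Rightarrow> complex vec
    \<Rightarrow> (nat \<Rightarrow> complex mat) \<Rightarrow> complex mat \<Rightarrow> real \<Rightarrow> bool" where
  "opt_SDR33 M K G hD hR Gam s2 P0 \<theta> d lam v W R0 u \<longleftrightarrow>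
     feas_SDR33 M K G hD hR Gam s2 P0 \<theta> d lam v W R0 u \<and>
     (\<forall>W' R0' u'. feas_SDR33 M K G hD hR Gam s2 P0 \<theta> d lam v W' R0' u' \<longrightarrow> u' \<le> u)"

definition quadW :: "complex vec \<Rightarrow> complex mat \<Rightarrow> complex" where
  "quadW h Wk = conjugate h \<bullet> (Wk *\<^sub>v h)"

(* w_k^{opt,I} = (h_k^H W_k h_k)^{-1/2} W_k h_k  (the scalar is real positive when well defined) *)
definition w_optI :: "complex vec \<Rightarrow> complex mat \<Rightarrow> complex vec" where
  "w_optI h Wk = complex_of_real (1 / sqrt (Re (quadW h Wk))) \<cdot>\<^sub>v (Wk *\<^sub>v h)"

end

theory Submission
  imports Defs
begin

text \<open>Problem (P3.2) is (SDR3.3) restricted to rank-one matrices W k = w k w k^H, so its value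
  is at most that of the relaxation. Conversely, the constraints of (SDR3.3) involve W and R0,
  besides positivity, only through the aggregate sum W k + R0 and the received powers
  h k^H W k h k, which the SINR constraint forces to be at least Gam k s2 k > 0. The rank-one
  matrix w k w k^H with w k = W k h k / sqrt (h k^H W k h k) has the same received power, and
  W k - w k w k^H is positive semidefinite by the Cauchy-Schwarz inequality for the
  semi-inner product given by W k. Moving these differences into R0 keeps the aggregate, hence
  every constraint, and produces a rank-one optimal point of the relaxation with the same u.\<close>

lemma sesq_expand:
  assumes "A \<in> carrier_mat n n" "x \<in> carrier_vec n" "y \<in> carrier_vec n"
  shows "conjugate x \<bullet> (A *\<^sub>v y) = (\<Sum>i<n. \<Sum>j<n. cnj (x$i) * A$$(i,j) * y$j)"
  using assms
  by (auto simp: scalar_prod_def row_def sum_distrib_left lessThan_atLeast0 mult.assoc intro!: sum.cong)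

lemma mat_adjoint_index:
  assumes "A \<in> carrier_mat n n" "i < n" "j < n"
  shows "mat_adjoint A $$ (i, j) = cnj (A $$ (j, i))"
  using assms unfolding mat_adjoint_def by (auto simp: mat_of_rows_def)

lemma mat_adjoint_carrier: "mat_adjoint A \<in> carrier_mat (dim_col A) (dim_row A)"
  unfolding mat_adjoint_def by auto

lemma hermitian_mat_iff:
  "hermitian_mat n A \<longleftrightarrow> A \<in> carrier_mat n n \<and> (\<forall>i<n. \<forall>j<n. A$$(i,j) = cnj (A$$(j,i)))"
proof
  assume h: "hermitian_mat n A"
  then have A: "A \<in> carrier_mat n n" by (simp add: hermitian_mat_def)
  have "A $$ (i, j) = cnj (A $$ (j, i))" if "i < n" "j < n" for i j
    using h that mat_adjoint_index[OF A that] by (simp add: hermitian_mat_def)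
  with A show "A \<in> carrier_mat n n \<and> (\<forall>i<n. \<forall>j<n. A$$(i,j) = cnj (A$$(j,i)))" by blast
next
  assume h: "A \<in> carrier_mat n n \<and> (\<forall>i<n. \<forall>j<n. A$$(i,j) = cnj (A$$(j,i)))"
  then have A: "A \<in> carrier_mat n n"
    and hA: "\<And>i j. i < n \<Longrightarrow> j < n \<Longrightarrow> A $$ (i, j) = cnj (A $$ (j, i))" by blast+
  have "mat_adjoint A = A"
  proof (rule eq_matI)
    fix i j assume "i < dim_row A" "j < dim_col A"
    with A have ij: "i < n" "j < n" by auto
    show "mat_adjoint A $$ (i, j) = A $$ (i, j)"
      using mat_adjoint_index[OF A ij] hA[OF ij(2) ij(1)] by simp
  qed (use A in \<open>auto simp: mat_adjoint_def\<close>)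
  with A show "hermitian_mat n A" by (simp add: hermitian_mat_def)
qed

lemma hermitian_mat_add:
  assumes "hermitian_mat n A" "hermitian_mat n B"
  shows "hermitian_mat n (A + B)"
  unfolding hermitian_mat_iff
proof (intro conjI allI impI)
  have A: "A \<in> carrier_mat n n" and B: "B \<in> carrier_mat n n"
    using assms by (simp_all add: hermitian_mat_iff)
  then show "A + B \<in> carrier_mat n n" by simp
  fix i j assume ij: "i < n" "j < n"
  have "A $$ (i, j) = cnj (A $$ (j, i))" "B $$ (i, j) = cnj (B $$ (j, i))"
    using assms ij unfolding hermitian_mat_iff by blast+
  then show "(A + B) $$ (i, j) = cnj ((A + B) $$ (j, i))" using A B ij by simp
qed

lemma hermitian_mat_minus:
  assumes "hermitian_mat n A" "hermitian_mat n B"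
  shows "hermitian_mat n (A - B)"
  unfolding hermitian_mat_iff
proof (intro conjI allI impI)
  have A: "A \<in> carrier_mat n n" and B: "B \<in> carrier_mat n n"
    using assms by (simp_all add: hermitian_mat_iff)
  then show "A - B \<in> carrier_mat n n" by (simp add: minus_carrier_mat)
  fix i j assume ij: "i < n" "j < n"
  have "A $$ (i, j) = cnj (A $$ (j, i))" "B $$ (i, j) = cnj (B $$ (j, i))"
    using assms ij unfolding hermitian_mat_iff by blast+
  then show "(A - B) $$ (i, j) = cnj ((A - B) $$ (j, i))" using A B ij by simp
qed

lemma psd_mat_carrier: "psd_mat n A \<Longrightarrow> A \<in> carrier_mat n n"
  by (simp add: psd_mat_def hermitian_mat_def)

lemma quadW_add:
  assumes "A \<in> carrier_mat n n" "B \<in> carrier_mat n n" "x \<in> carrier_vec n"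
  shows "quadW x (A + B) = quadW x A + quadW x B"
  using assms unfolding quadW_def
  by (simp add: add_mult_distrib_mat_vec scalar_prod_add_distrib[of _ n])

lemma quadW_minus:
  assumes "A \<in> carrier_mat n n" "B \<in> carrier_mat n n" "x \<in> carrier_vec n"
  shows "quadW x (A - B) = quadW x A - quadW x B"
  using assms unfolding quadW_def
  by (simp add: minus_mult_distrib_mat_vec scalar_prod_minus_distrib[of _ n])

lemma psd_mat_add:
  assumes "psd_mat n A" "psd_mat n B"
  shows "psd_mat n (A + B)"
  unfolding psd_mat_def
proof (intro conjI ballI)
  show "hermitian_mat n (A + B)"
    using assms by (simp add: psd_mat_def hermitian_mat_add)
  fix x :: "complex vec" assume x: "x \<in> carrier_vec n"
  have "quadW x (A + B) = quadW x A + quadW x B"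
    using quadW_add[OF psd_mat_carrier psd_mat_carrier x] assms by simp
  moreover have "Re (quadW x A) \<ge> 0" "Re (quadW x B) \<ge> 0"
    using assms x by (simp_all add: psd_mat_def quadW_def)
  ultimately show "Re (conjugate x \<bullet> ((A + B) *\<^sub>v x)) \<ge> 0" by (simp add: quadW_def)
qed

lemma msum_carrier [simp]: "msum n K F \<in> carrier_mat n n"
  by (simp add: msum_def)

lemma msum_index [simp]: "i < n \<Longrightarrow> j < n \<Longrightarrow> msum n K F $$ (i, j) = (\<Sum>k<K. F k $$ (i, j))"
  by (simp add: msum_def)

lemma msum_dim [simp]: "dim_row (msum n K F) = n" "dim_col (msum n K F) = n"
  by (simp_all add: msum_def)

lemma sesq_msum:
  assumes "\<forall>k<K. F k \<in> carrier_mat n n" "x \<in> carrier_vec n" "y \<in> carrier_vec n"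
  shows "conjugate x \<bullet> (msum n K F *\<^sub>v y) = (\<Sum>k<K. conjugate x \<bullet> (F k *\<^sub>v y))"
proof -
  have "conjugate x \<bullet> (msum n K F *\<^sub>v y) = (\<Sum>i<n. \<Sum>j<n. \<Sum>k<K. cnj (x$i) * F k $$ (i, j) * y$j)"
    by (simp add: sesq_expand[OF msum_carrier assms(2,3)] sum_distrib_left sum_distrib_right)
  also have "\<dots> = (\<Sum>k<K. \<Sum>i<n. \<Sum>j<n. cnj (x$i) * F k $$ (i, j) * y$j)"
    by (simp add: sum.swap[of _ "{..<K}"])
  also have "\<dots> = (\<Sum>k<K. conjugate x \<bullet> (F k *\<^sub>v y))"
    using assms by (auto intro!: sum.cong simp: sesq_expand)
  finally show ?thesis .
qed

lemma ctrace_add: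
  "A \<in> carrier_mat n n \<Longrightarrow> B \<in> carrier_mat n n \<Longrightarrow> ctrace (A + B) = ctrace A + ctrace B"
  by (simp add: ctrace_def sum.distrib)

lemma ctrace_msum:
  assumes "\<forall>k<K. F k \<in> carrier_mat n n"
  shows "ctrace (msum n K F) = (\<Sum>k<K. ctrace (F k))"
proof -
  have "ctrace (msum n K F) = (\<Sum>i<n. \<Sum>k<K. F k $$ (i, i))"
    by (simp add: ctrace_def msum_def)
  also have "\<dots> = (\<Sum>k<K. ctrace (F k))"
    using assms by (subst sum.swap) (auto simp: ctrace_def intro!: sum.cong)
  finally show ?thesis .
qed

lemma Re_ctrace_msum_add:
  assumes "\<forall>k<K. F k \<in> carrier_mat n n" "R \<in> carrier_mat n n"
  shows "Re (ctrace (msum n K F + R)) = (\<Sum>k<K. Re (ctrace (F k))) + Re (ctrace R)"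
  using assms by (simp add: ctrace_add[OF msum_carrier] ctrace_msum)

lemma hermitian_mat_msum:
  assumes "\<forall>k<K. hermitian_mat n (F k)"
  shows "hermitian_mat n (msum n K F)"
  unfolding hermitian_mat_iff
proof (intro conjI allI impI)
  fix i j assume ij: "i < n" "j < n"
  have "F k $$ (i, j) = cnj (F k $$ (j, i))" if "k < K" for k
    using assms that ij unfolding hermitian_mat_iff by blast
  then show "msum n K F $$ (i, j) = cnj (msum n K F $$ (j, i))"
    using ij by (simp add: cnj_sum)
qed simp

lemma psd_mat_msum:
  assumes "\<forall>k<K. psd_mat n (F k)"
  shows "psd_mat n (msum n K F)"
  unfolding psd_mat_def
proof (intro conjI ballI)
  show "hermitian_mat n (msum n K F)"
    using assms by (simp add: psd_mat_def hermitian_mat_msum)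
  fix x :: "complex vec" assume x: "x \<in> carrier_vec n"
  have "Re (conjugate x \<bullet> (msum n K F *\<^sub>v x)) = (\<Sum>k<K. Re (conjugate x \<bullet> (F k *\<^sub>v x)))"
    using assms x by (simp add: sesq_msum psd_mat_carrier)
  also have "\<dots> \<ge> 0"
    using assms x by (intro sum_nonneg) (simp add: psd_mat_def)
  finally show "Re (conjugate x \<bullet> (msum n K F *\<^sub>v x)) \<ge> 0" .
qed

lemma add_msum_minus_msum:
  assumes "R \<in> carrier_mat n n" "\<forall>k<K. F k \<in> carrier_mat n n" "\<forall>k<K. G k \<in> carrier_mat n n"
  shows "R + msum n K F - msum n K G = R + msum n K (\<lambda>k. F k - G k)"
proof (rule eq_matI)
  fix i j assume "i < dim_row (R + msum n K (\<lambda>k. F k - G k))" "j < dim_col (R + msum n K (\<lambda>k. F k - G k))"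
  with assms(1) have ij: "i < n" "j < n" by auto
  have "(\<Sum>k<K. (F k - G k) $$ (i, j)) = (\<Sum>k<K. F k $$ (i, j) - G k $$ (i, j))"
    using assms(2,3) ij by (intro sum.cong) auto
  with assms(1) ij show "(R + msum n K F - msum n K G) $$ (i, j) = (R + msum n K (\<lambda>k. F k - G k)) $$ (i, j)"
    by (simp add: sum_subtractf)
qed (use assms(1) in auto)

lemma outer_carrier [simp]: "w \<in> carrier_vec n \<Longrightarrow> outer w (conjugate w) \<in> carrier_mat n n"
  by (simp add: outer_def)

lemma sesq_outer:
  assumes "w \<in> carrier_vec n" "x \<in> carrier_vec n" "y \<in> carrier_vec n"
  shows "conjugate x \<bullet> (outer w (conjugate w) *\<^sub>v y) = (conjugate x \<bullet> w) * cnj (conjugate y \<bullet> w)"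
proof -
  have "conjugate x \<bullet> (outer w (conjugate w) *\<^sub>v y)
      = (\<Sum>i<n. \<Sum>j<n. (cnj (x$i) * w$i) * (y$j * cnj (w$j)))"
    using assms by (subst sesq_expand[of _ n]) (auto simp: outer_def ac_simps intro!: sum.cong)
  also have "\<dots> = (\<Sum>i<n. cnj (x$i) * w$i) * (\<Sum>j<n. y$j * cnj (w$j))"
    by (simp add: sum_product)
  also have "\<dots> = (conjugate x \<bullet> w) * cnj (conjugate y \<bullet> w)"
    using assms by (simp add: scalar_prod_def lessThan_atLeast0 cnj_sum mult.commute)
  finally show ?thesis .
qed

lemma quadW_outer:
  assumes "w \<in> carrier_vec n" "x \<in> carrier_vec n"
  shows "quadW x (outer w (conjugate w)) = complex_of_real ((cmod (conjugate x \<bullet> w))\<^sup>2)"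
  unfolding quadW_def sesq_outer[OF assms assms(2)] by (rule complex_norm_square[symmetric])

lemma psd_mat_outer:
  assumes "w \<in> carrier_vec n"
  shows "psd_mat n (outer w (conjugate w))"
  using assms quadW_outer[OF assms]
  unfolding psd_mat_def hermitian_mat_iff quadW_def by (auto simp: outer_def)

lemma ctrace_outer: "ctrace (outer w (conjugate w)) = complex_of_real (sqnorm w)"
  by (simp add: ctrace_def sqnorm_def complex_norm_square outer_def del: of_real_power)

lemma ctrace_Hmat_mult:
  assumes "h \<in> carrier_vec n" "A \<in> carrier_mat n n"
  shows "ctrace (Hmat h * A) = quadW h A"
proof -
  have "ctrace (Hmat h * A) = (\<Sum>i<n. \<Sum>j<n. h$i * cnj (h$j) * A$$(j, i))"
    using assms by (simp add: ctrace_def Hmat_def outer_def scalar_prod_def col_def lessThan_atLeast0)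
  also have "\<dots> = (\<Sum>j<n. \<Sum>i<n. cnj (h$j) * A$$(j, i) * h$i)"
    by (subst sum.swap) (simp add: algebra_simps)
  also have "\<dots> = quadW h A"
    using assms by (simp add: quadW_def sesq_expand)
  finally show ?thesis .
qed

lemma Re_ctrace_Hmat_msum_add:
  assumes "h \<in> carrier_vec n" "\<forall>k<K. F k \<in> carrier_mat n n" "R \<in> carrier_mat n n"
  shows "Re (ctrace (Hmat h * (msum n K F + R))) = (\<Sum>k<K. Re (quadW h (F k))) + Re (quadW h R)"
proof -
  have "quadW h (msum n K F) = (\<Sum>k<K. quadW h (F k))"
    using assms by (simp add: quadW_def sesq_msum)
  then show ?thesis
    using assms by (simp add: ctrace_Hmat_mult quadW_add[OF msum_carrier])
qed

lemma sesq_hermitian_cnj: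
  assumes "hermitian_mat n A" "x \<in> carrier_vec n" "y \<in> carrier_vec n"
  shows "cnj (conjugate x \<bullet> (A *\<^sub>v y)) = conjugate y \<bullet> (A *\<^sub>v x)"
proof -
  have A: "A \<in> carrier_mat n n"
    and hA: "\<And>i j. i < n \<Longrightarrow> j < n \<Longrightarrow> cnj (A $$ (i, j)) = A $$ (j, i)"
    using assms(1) unfolding hermitian_mat_iff by (metis complex_cnj_cnj)+
  have "cnj (conjugate x \<bullet> (A *\<^sub>v y)) = (\<Sum>i<n. \<Sum>j<n. x$i * cnj (A $$ (i, j)) * cnj (y$j))"
    by (simp add: sesq_expand[OF A assms(2,3)])
  also have "\<dots> = (\<Sum>j<n. \<Sum>i<n. cnj (y$j) * A $$ (j, i) * x$i)"
    by (subst sum.swap) (auto simp: hA ac_simps intro!: sum.cong)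
  also have "\<dots> = conjugate y \<bullet> (A *\<^sub>v x)"
    by (simp add: sesq_expand[OF A assms(3,2)])
  finally show ?thesis .
qed

lemma quadW_hermitian_real:
  assumes "hermitian_mat n A" "x \<in> carrier_vec n"
  shows "quadW x A = complex_of_real (Re (quadW x A))"
  using sesq_hermitian_cnj[OF assms assms(2)] unfolding quadW_def by (simp add: complex_eq_iff)

lemma quadW_diff_smult:
  assumes "W \<in> carrier_mat n n" "x \<in> carrier_vec n" "h \<in> carrier_vec n"
  shows "quadW (x - t \<cdot>\<^sub>v h) W =
    quadW x W - t * (conjugate x \<bullet> (W *\<^sub>v h)) - cnj t * (conjugate h \<bullet> (W *\<^sub>v x)) + t * cnj t * quadW h W"
proof -
  have c: "x - t \<cdot>\<^sub>v h \<in> carrier_vec n" using assms by simp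
  have "quadW (x - t \<cdot>\<^sub>v h) W =
     (\<Sum>i<n. \<Sum>j<n. cnj (x$i) * W $$ (i, j) * x$j - t * (cnj (x$i) * W $$ (i, j) * h$j)
        - cnj t * (cnj (h$i) * W $$ (i, j) * x$j) + t * cnj t * (cnj (h$i) * W $$ (i, j) * h$j))"
    unfolding quadW_def sesq_expand[OF assms(1) c c]
    using assms by (intro sum.cong refl) (simp add: algebra_simps)
  then show ?thesis
    using assms by (simp only: quadW_def sesq_expand sum.distrib sum_subtractf sum_distrib_left)
qed

text \<open>Evaluating the nonnegative form of W at x - t h, with t the minimising multiple of h,
  gives the Cauchy-Schwarz inequality for the semi-inner product defined by W.\<close>

lemma psd_cauchy_schwarz:
  assumes W: "psd_mat n W" and h: "h \<in> carrier_vec n" and x: "x \<in> carrier_vec n"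
    and pos: "Re (quadW h W) > 0"
  shows "(cmod (conjugate x \<bullet> (W *\<^sub>v h)))\<^sup>2 \<le> Re (quadW x W) * Re (quadW h W)"
proof -
  have herm: "hermitian_mat n W" and c: "W \<in> carrier_mat n n"
    using W by (simp_all add: psd_mat_def psd_mat_carrier)
  define a where "a = Re (quadW h W)"
  define B where "B = conjugate h \<bullet> (W *\<^sub>v x)"
  define t where "t = B / complex_of_real a"
  have Qh: "quadW h W = complex_of_real a"
    unfolding a_def using quadW_hermitian_real[OF herm h] .
  have Bxh: "conjugate x \<bullet> (W *\<^sub>v h) = cnj B"
    unfolding B_def using sesq_hermitian_cnj[OF herm h x] by simp
  have a: "a > 0" using pos a_def by simp
  have "t * cnj B = complex_of_real ((cmod B)\<^sup>2 / a)" "cnj t * B = complex_of_real ((cmod B)\<^sup>2 / a)"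
    "t * cnj t * complex_of_real a = complex_of_real ((cmod B)\<^sup>2 / a)"
    using complex_norm_square[of B] a unfolding t_def by (auto simp: field_simps power2_eq_square)
  then have "quadW (x - t \<cdot>\<^sub>v h) W = quadW x W - complex_of_real ((cmod B)\<^sup>2 / a)"
    using quadW_diff_smult[OF c x h, of t] Qh Bxh B_def by simp
  moreover have "0 \<le> Re (quadW (x - t \<cdot>\<^sub>v h) W)"
    using W x h by (simp add: psd_mat_def quadW_def)
  ultimately have "(cmod B)\<^sup>2 / a \<le> Re (quadW x W)" by simp
  then show ?thesis
    using Bxh a unfolding a_def by (simp add: pos_divide_le_eq)
qed

lemma w_optI_carrier:
  "W \<in> carrier_mat n n \<Longrightarrow> h \<in> carrier_vec n \<Longrightarrow> w_optI h W \<in> carrier_vec n"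
  by (simp add: w_optI_def)

lemma cmod_sesq_w_optI:
  assumes "W \<in> carrier_mat n n" "h \<in> carrier_vec n" "x \<in> carrier_vec n" "Re (quadW h W) > 0"
  shows "(cmod (conjugate x \<bullet> w_optI h W))\<^sup>2 = (cmod (conjugate x \<bullet> (W *\<^sub>v h)))\<^sup>2 / Re (quadW h W)"
proof -
  have "conjugate x \<bullet> w_optI h W = complex_of_real (1 / sqrt (Re (quadW h W))) * (conjugate x \<bullet> (W *\<^sub>v h))"
    using assms unfolding w_optI_def by simp
  then show ?thesis
    using assms(4) by (simp add: norm_divide power_divide)
qed

lemma quadW_outer_w_optI:
  assumes W: "psd_mat n W" and h: "h \<in> carrier_vec n" and pos: "Re (quadW h W) > 0"
  shows "quadW h (outer (w_optI h W) (conjugate (w_optI h W))) = quadW h W"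
proof -
  have c: "W \<in> carrier_mat n n" using W by (rule psd_mat_carrier)
  have real: "quadW h W = complex_of_real (Re (quadW h W))"
    using W h quadW_hermitian_real[of n W h] by (simp add: psd_mat_def)
  have "(cmod (quadW h W))\<^sup>2 / Re (quadW h W) = Re (quadW h W)"
    using pos by (subst real) (simp add: power2_eq_square)
  then show ?thesis
    using quadW_outer[OF w_optI_carrier[OF c h] h] cmod_sesq_w_optI[OF c h h pos] real
    unfolding quadW_def by simp
qed

lemma psd_mat_minus_outer_w_optI:
  assumes W: "psd_mat n W" and h: "h \<in> carrier_vec n" and pos: "Re (quadW h W) > 0"
  shows "psd_mat n (W - outer (w_optI h W) (conjugate (w_optI h W)))"
  unfolding psd_mat_def
proof (intro conjI ballI)
  have c: "W \<in> carrier_mat n n" using W by (rule psd_mat_carrier)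
  have wc: "w_optI h W \<in> carrier_vec n" using w_optI_carrier[OF c h] .
  show "hermitian_mat n (W - outer (w_optI h W) (conjugate (w_optI h W)))"
    using W psd_mat_outer[OF wc] by (simp add: psd_mat_def hermitian_mat_minus)
  fix x :: "complex vec" assume x: "x \<in> carrier_vec n"
  have "Re (quadW x (W - outer (w_optI h W) (conjugate (w_optI h W))))
      = Re (quadW x W) - (cmod (conjugate x \<bullet> (W *\<^sub>v h)))\<^sup>2 / Re (quadW h W)"
    using quadW_minus[OF c outer_carrier[OF wc] x] quadW_outer[OF wc x] cmod_sesq_w_optI[OF c h x pos]
    by simp
  also have "\<dots> \<ge> 0"
    using psd_cauchy_schwarz[OF W h x pos] pos by (simp add: pos_divide_le_eq)
  finally show "Re (conjugate x \<bullet> ((W - outer (w_optI h W) (conjugate (w_optI h W))) *\<^sub>v x)) \<ge> 0"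
    by (simp add: quadW_def)
qed

lemma le_divide_iff_excess:
  fixes g s a D :: real
  assumes "g > 0" "D + s > 0"
  shows "g \<le> a / (D + s) \<longleftrightarrow> s \<le> (1 + 1 / g) * a - (a + D)"
proof -
  have "g \<le> a / (D + s) \<longleftrightarrow> D + s \<le> a / g"
    using assms by (simp add: pos_le_divide_eq pos_divide_le_eq mult.commute)
  also have "\<dots> \<longleftrightarrow> s \<le> (1 + 1 / g) * a - (a + D)"
    by (simp add: algebra_simps)
  finally show ?thesis .
qed

lemma heff_carrier:
  assumes "G \<in> carrier_mat N M" "hD k \<in> carrier_vec M" "hR k \<in> carrier_vec N" "v \<in> carrier_vec N"
  shows "heff G hD hR v k \<in> carrier_vec M"
proof -
  have "mat_adjoint G \<in> carrier_mat M N"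
    using mat_adjoint_carrier[of G] assms(1) by auto
  moreover have "mat_adjoint (Phi v) \<in> carrier_mat N N"
    using mat_adjoint_carrier[of "Phi v"] assms(4) by (auto simp: Phi_def)
  ultimately show ?thesis using assms unfolding heff_def by auto
qed

lemma sinrI_ge_iff_rank_one_constraint:
  assumes "Gam > 0" "s > 0" "k < K" "h \<in> carrier_vec n"
    and w: "\<forall>i<K. w i \<in> carrier_vec n" and R: "psd_mat n R"
  shows "Gam \<le> sinrI K h w R s k \<longleftrightarrow>
    s \<le> (1 + 1 / Gam) * Re (ctrace (Hmat h * outer (w k) (conjugate (w k))))
         - Re (ctrace (Hmat h * (msum n K (\<lambda>i. outer (w i) (conjugate (w i))) + R)))"
proof -
  define q where "q i = (cmod (conjugate h \<bullet> w i))\<^sup>2" for i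
  define D where "D = (\<Sum>i\<in>{..<K}-{k}. q i) + Re (quadW h R)"
  have q: "Re (quadW h (outer (w i) (conjugate (w i)))) = q i" if "i < K" for i
  proof -
    have wi: "w i \<in> carrier_vec n" using w that by simp
    show ?thesis unfolding q_def quadW_outer[OF wi assms(4)] by simp
  qed
  have "D \<ge> 0"
    using assms(4) R unfolding D_def q_def by (intro add_nonneg_nonneg sum_nonneg) (auto simp: psd_mat_def quadW_def)
  have sinr: "sinrI K h w R s k = q k / (D + s)"
    unfolding sinrI_def D_def q_def quadW_def by simp
  have signal: "Re (ctrace (Hmat h * outer (w k) (conjugate (w k)))) = q k"
    using ctrace_Hmat_mult q assms(3,4) w by simp
  have "Re (ctrace (Hmat h * (msum n K (\<lambda>i. outer (w i) (conjugate (w i))) + R)))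
      = (\<Sum>i<K. q i) + Re (quadW h R)"
    using Re_ctrace_Hmat_msum_add[of h n K _ R] assms(4) w R q by (simp add: psd_mat_carrier)
  also have "\<dots> = q k + D"
    using assms(3) unfolding D_def by (simp add: sum.remove)
  finally show ?thesis
    using le_divide_iff_excess[of Gam D s "q k"] \<open>D \<ge> 0\<close> assms(1,2) sinr signal by simp
qed

lemma feas_P32_iff_feas_SDR33_rank_one:
  assumes "\<forall>k<K. Gam k > 0 \<and> s2 k > 0" "\<forall>k<K. heff G hD hR v k \<in> carrier_vec M"
  shows "feas_P32 M K G hD hR Gam s2 P0 \<theta> d lam v w R0 u \<longleftrightarrow>
    feas_SDR33 M K G hD hR Gam s2 P0 \<theta> d lam v (\<lambda>k. outer (w k) (conjugate (w k))) R0 u"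
proof -
  have carrier: "(\<forall>k<K. psd_mat M (outer (w k) (conjugate (w k)))) \<longleftrightarrow> (\<forall>k<K. w k \<in> carrier_vec M)"
  proof -
    have "outer x (conjugate x) \<in> carrier_mat M M \<Longrightarrow> x \<in> carrier_vec M" for x
      unfolding outer_def by (metis carrier_matD(1) carrier_vecI dim_row_mat(1))
    then show ?thesis using psd_mat_outer psd_mat_carrier by meson
  qed
  have power: "(\<Sum>k<K. Re (ctrace (outer (w k) (conjugate (w k))))) = (\<Sum>k<K. sqnorm (w k))"
    by (simp add: ctrace_outer)
  have sinr: "(\<forall>k<K. Gam k \<le> sinrI K (heff G hD hR v k) w R0 (s2 k) k) \<longleftrightarrow>
    (\<forall>k<K. let H = Hmat (heff G hD hR v k) in
       s2 k \<le> (1 + 1 / Gam k) * Re (ctrace (H * outer (w k) (conjugate (w k))))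
              - Re (ctrace (H * (msum M K (\<lambda>k. outer (w k) (conjugate (w k))) + R0))))"
    if w: "\<forall>k<K. w k \<in> carrier_vec M" and R0: "psd_mat M R0"
  proof -
    have "Gam k \<le> sinrI K (heff G hD hR v k) w R0 (s2 k) k \<longleftrightarrow>
        s2 k \<le> (1 + 1 / Gam k) * Re (ctrace (Hmat (heff G hD hR v k) * outer (w k) (conjugate (w k))))
               - Re (ctrace (Hmat (heff G hD hR v k) * (msum M K (\<lambda>k. outer (w k) (conjugate (w k))) + R0)))"
      if "k < K" for k
      using sinrI_ge_iff_rank_one_constraint[OF _ _ that _ w R0] assms that by simp
    then show ?thesis unfolding Let_def by blast
  qed
  show ?thesis
    unfolding feas_P32_def feas_SDR33_def using carrier power sinr by auto
qed

lemma feas_SDR33_quadW_pos: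
  assumes feas: "feas_SDR33 M K G hD hR Gam s2 P0 \<theta> d lam v W R0 u"
    and "Gam k > 0" "s2 k > 0" "k < K" and h: "heff G hD hR v k \<in> carrier_vec M"
  shows "Re (quadW (heff G hD hR v k) (W k)) > 0"
proof -
  define a where "a i = Re (quadW (heff G hD hR v k) (W i))" for i
  define D where "D = (\<Sum>i\<in>{..<K}-{k}. a i) + Re (quadW (heff G hD hR v k) R0)"
  have W: "\<forall>i<K. psd_mat M (W i)" and R: "psd_mat M R0"
    and sdr: "s2 k \<le> (1 + 1 / Gam k) * Re (ctrace (Hmat (heff G hD hR v k) * W k))
                     - Re (ctrace (Hmat (heff G hD hR v k) * (msum M K W + R0)))"
    using feas \<open>k < K\<close> unfolding feas_SDR33_def Let_def by auto
  have "D \<ge> 0"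
    using W R h unfolding D_def a_def
    by (intro add_nonneg_nonneg sum_nonneg) (auto simp: psd_mat_def quadW_def)
  have "Re (ctrace (Hmat (heff G hD hR v k) * (msum M K W + R0))) = a k + D"
    using Re_ctrace_Hmat_msum_add[OF h, of K W R0] W R \<open>k < K\<close>
    unfolding D_def a_def by (simp add: psd_mat_carrier sum.remove)
  moreover have "Re (ctrace (Hmat (heff G hD hR v k) * W k)) = a k"
    using ctrace_Hmat_mult[OF h] W \<open>k < K\<close> unfolding a_def by (simp add: psd_mat_carrier)
  ultimately have "s2 k \<le> a k / Gam k - D"
    using sdr by (simp add: algebra_simps)
  then have "a k / Gam k > 0" using \<open>D \<ge> 0\<close> \<open>s2 k > 0\<close> by linarith
  then show ?thesis using \<open>Gam k > 0\<close> unfolding a_def by (simp add: zero_less_divide_iff)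
qed

lemma feas_SDR33_same_aggregate:
  assumes feas: "feas_SDR33 M K G hD hR Gam s2 P0 \<theta> d lam v W R0 u"
    and W': "\<forall>k<K. psd_mat M (W' k)" and R0': "psd_mat M R0'"
    and aggregate: "msum M K W' + R0' = msum M K W + R0"
    and received: "\<forall>k<K. ctrace (Hmat (heff G hD hR v k) * W' k) = ctrace (Hmat (heff G hD hR v k) * W k)"
  shows "feas_SDR33 M K G hD hR Gam s2 P0 \<theta> d lam v W' R0' u"
proof -
  have W: "\<forall>k<K. psd_mat M (W k)" and R0: "psd_mat M R0"
    using feas unfolding feas_SDR33_def by auto
  have "(\<Sum>k<K. Re (ctrace (W' k))) + Re (ctrace R0') = (\<Sum>k<K. Re (ctrace (W k))) + Re (ctrace R0)"
    using Re_ctrace_msum_add[of K W' M R0'] Re_ctrace_msum_add[of K W M R0] W W' R0 R0' aggregate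
    by (simp add: psd_mat_carrier)
  then show ?thesis
    using feas W' R0' aggregate received unfolding feas_SDR33_def Let_def by simp
qed

lemma feas_SDR33_rank_one_extraction:
  assumes feas: "feas_SDR33 M K G hD hR Gam s2 P0 \<theta> d lam v W R0 u"
    and Gam_s2: "\<forall>k<K. Gam k > 0 \<and> s2 k > 0" and h: "\<forall>k<K. heff G hD hR v k \<in> carrier_vec M"
  defines "w \<equiv> \<lambda>k. w_optI (heff G hD hR v k) (W k)"
  defines "R \<equiv> R0 + msum M K W - msum M K (\<lambda>k. outer (w k) (conjugate (w k)))"
  shows "psd_mat M R" and "feas_P32 M K G hD hR Gam s2 P0 \<theta> d lam v w R u"
proof -
  define Wr where "Wr k = outer (w k) (conjugate (w k))" for k
  have W: "\<forall>k<K. psd_mat M (W k)" and R0: "psd_mat M R0"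
    using feas unfolding feas_SDR33_def by auto
  have pos: "\<forall>k<K. Re (quadW (heff G hD hR v k) (W k)) > 0"
    using feas_SDR33_quadW_pos[OF feas] Gam_s2 h by blast
  have w: "\<forall>k<K. w k \<in> carrier_vec M"
    using w_optI_carrier psd_mat_carrier W h unfolding w_def by blast
  have "R = R0 + msum M K (\<lambda>k. W k - Wr k)"
    unfolding R_def Wr_def using add_msum_minus_msum[of R0 M K W] R0 W w
    by (simp add: psd_mat_carrier)
  moreover have "\<forall>k<K. psd_mat M (W k - Wr k)"
    using psd_mat_minus_outer_w_optI W h pos unfolding Wr_def w_def by blast
  ultimately show R: "psd_mat M R"
    using psd_mat_add[OF R0 psd_mat_msum] by simp
  have aggregate: "msum M K Wr + R = msum M K W + R0"
    unfolding R_def Wr_def using carrier_matD[OF psd_mat_carrier[OF R0]] by (intro eq_matI) auto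
  have "ctrace (Hmat (heff G hD hR v k) * Wr k) = ctrace (Hmat (heff G hD hR v k) * W k)"
    if "k < K" for k
  proof -
    have Wk: "psd_mat M (W k)" and hk: "heff G hD hR v k \<in> carrier_vec M"
      and pk: "Re (quadW (heff G hD hR v k) (W k)) > 0" and wk: "w k \<in> carrier_vec M"
      using W h pos w that by auto
    show ?thesis
      unfolding Wr_def ctrace_Hmat_mult[OF hk outer_carrier[OF wk]] ctrace_Hmat_mult[OF hk psd_mat_carrier[OF Wk]]
      unfolding w_def by (rule quadW_outer_w_optI[OF Wk hk pk])
  qed
  then have "feas_SDR33 M K G hD hR Gam s2 P0 \<theta> d lam v Wr R u"
    using feas_SDR33_same_aggregate[OF feas _ R aggregate] psd_mat_outer w unfolding Wr_def by auto
  then show "feas_P32 M K G hD hR Gam s2 P0 \<theta> d lam v w R u"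
    using feas_P32_iff_feas_SDR33_rank_one Gam_s2 h unfolding Wr_def by blast
qed

theorem proposition6:
  fixes M N K :: nat
    and G :: "complex mat" and hD hR :: "nat \<Rightarrow> complex vec"
    and Gam s2 :: "nat \<Rightarrow> real" and P0 \<theta> d lam :: real
    and v :: "complex vec"
    and W :: "nat \<Rightarrow> complex mat" and R0 :: "complex mat" and u :: real
  assumes "M \<ge> 1" and "N \<ge> 1" and "K \<ge> 1"
    and "G \<in> carrier_mat N M"
    and "\<forall>k<K. hD k \<in> carrier_vec M \<and> hR k \<in> carrier_vec N"
    and "\<forall>k<K. Gam k > 0 \<and> s2 k > 0"
    and "P0 > 0" and "d > 0" and "lam > 0"
    and "v \<in> carrier_vec N" and "\<forall>n<N. cmod (v $ n) = 1"
    and "opt_SDR33 M K G hD hR Gam s2 P0 \<theta> d lam v W R0 u"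
  shows "(\<forall>k<K. quadW (heff G hD hR v k) (W k) \<in> \<real> \<and> Re (quadW (heff G hD hR v k) (W k)) > 0)
     \<and> psd_mat M (R0 + msum M K W
          - msum M K (\<lambda>k. outer (w_optI (heff G hD hR v k) (W k))
                                (conjugate (w_optI (heff G hD hR v k) (W k)))))
     \<and> opt_P32 M K G hD hR Gam s2 P0 \<theta> d lam v
          (\<lambda>k. w_optI (heff G hD hR v k) (W k))
          (R0 + msum M K W
          - msum M K (\<lambda>k. outer (w_optI (heff G hD hR v k) (W k))
                                (conjugate (w_optI (heff G hD hR v k) (W k))))) u
     \<and> Sup {u'. \<exists>w' R0'. feas_P32 M K G hD hR Gam s2 P0 \<theta> d lam v w' R0' u'} = u
     \<and> Sup {u'. \<exists>W' R0'. feas_SDR33 M K G hD hR Gam s2 P0 \<theta> d lam v W' R0' u'} = u"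
proof -
  have feas: "feas_SDR33 M K G hD hR Gam s2 P0 \<theta> d lam v W R0 u"
    and opt: "\<And>W' R0' u'. feas_SDR33 M K G hD hR Gam s2 P0 \<theta> d lam v W' R0' u' \<Longrightarrow> u' \<le> u"
    using assms(12) unfolding opt_SDR33_def by blast+
  have h: "\<forall>k<K. heff G hD hR v k \<in> carrier_vec M"
    using heff_carrier assms(4,5,10) by blast
  have "\<forall>k<K. quadW (heff G hD hR v k) (W k) \<in> \<real>"
    using feas quadW_hermitian_real h unfolding feas_SDR33_def psd_mat_def by (metis Reals_of_real)
  moreover have "\<forall>k<K. Re (quadW (heff G hD hR v k) (W k)) > 0"
    using feas_SDR33_quadW_pos[OF feas] assms(6) h by blast
  moreover have bound: "u' \<le> u" if "feas_P32 M K G hD hR Gam s2 P0 \<theta> d lam v w' R0' u'" for w' R0' u'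
    using that opt feas_P32_iff_feas_SDR33_rank_one assms(6) h by blast
  moreover note extraction = feas_SDR33_rank_one_extraction[OF feas assms(6) h]
  moreover have "Sup {u'. \<exists>w' R0'. feas_P32 M K G hD hR Gam s2 P0 \<theta> d lam v w' R0' u'} = u"
    by (rule cSup_eq_maximum) (use extraction(2) bound in blast)+
  moreover have "Sup {u'. \<exists>W' R0'. feas_SDR33 M K G hD hR Gam s2 P0 \<theta> d lam v W' R0' u'} = u"
    by (rule cSup_eq_maximum) (use feas opt in blast)+
  ultimately show ?thesis
    unfolding opt_P32_def by blast
qed

end
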